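(* Suppose $\alpha+\beta=-1$. Then for every $n\ge1$, writing $\Delta=(u_3+u_4)^2-4u_1u_2$, $$2^nP_n(u_1,u_2,u_3,u_4\mid\alpha,\beta)=\sum_{k=0}^{\lfloor n/2\rfloor}\binom{n}{2k}\Delta^k(\beta-\alpha)^{n-2k}(u_3-u_4)^{n-2k}-(u_3+u_4)\sum_{k=0}^{\lfloor n/2\rfloor}\binom{n}{2k+1}\Delta^k(\beta-\alpha)^{n-2k-1}(u_3-u_4)^{n-2k-1}.$$
   Context: For $\sigma=\sigma_1\cdots\sigma_m\in\mathfrak S_m$: ${\rm LRmax}(\sigma)$ is the number of $i$ with $\sigma_j<\sigma_i$ for all $j<i$; ${\rm RLmax}(\sigma)$ is the number of $i$ with $\sigma_j<\sigma_i$ for all $j>i$. With the convention $\sigma_0=\sigma_{m+1}=0$: ${\rm W}(\sigma)$ is the number of $i\in[m]$ with $\sigma_{i-1}<\sigma_i>\sigma_{i+1}$; ${\rm V}(\sigma)$ is the number of $i$ with $1<i<m$ and $\sigma_{i-1}>\sigma_i<\sigma_{i+1}$; ${\rm rdd}(\sigma)$ is the number of $i$ with $1<i\le m$ and $\sigma_{i-1}>\sigma_i>\sigma_{i+1}$; ${\rm lda}(\sigma)$ is the number of $i$ with $1\le i<m$ and $\sigma_{i-1}<\sigma_i<\sigma_{i+1}$. Define $$P_n(u_1,u_2,u_3,u_4\mid\alpha,\beta)=\sum_{\sigma\in\mathfrak S_{n+1}}u_1^{{\rm V}(\sigma)}u_2^{{\rm W}(\sigma)-1}u_3^{{\rm rdd}(\sigma)}u_4^{{\rm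 lda}(\sigma)}\alpha^{{\rm LRmax}(\sigma)-1}\beta^{{\rm RLmax}(\sigma)-1}.$$ Convention $0^0=1$. *)

theory Defs
  imports Main
begin

text \<open>A permutation of [m] is a list of the distinct values 1..m (one-line notation).
  The entry at position i (1-based) is sig xs i, with the convention sigma_0 = sigma_(m+1) = 0.\<close>

definition perms :: "nat \<Rightarrow> nat list set" where
  "perms m = {xs. distinct xs \<and> set xs = {1..m}}"

definition sig :: "nat list \<Rightarrow> nat \<Rightarrow> nat" where
  "sig xs i = (if 1 \<le> i \<and> i \<le> length xs then xs ! (i - 1) else 0)"

definition LRmax :: "nat list \<Rightarrow> nat" where
  "LRmax xs = card {i \<in> {1..length xs}. \<forall>j \<in> {1..<i}. sig xs j < sig xs i}"

definition RLmax :: "nat list \<Rightarrow> nat" where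
  "RLmax xs = card {i \<in> {1..length xs}. \<forall>j \<in> {i<..length xs}. sig xs j < sig xs i}"

definition Wst :: "nat list \<Rightarrow> nat" where
  "Wst xs = card {i \<in> {1..length xs}. sig xs (i - 1) < sig xs i \<and> sig xs i > sig xs (i + 1)}"

definition Vst :: "nat list \<Rightarrow> nat" where
  "Vst xs = card {i. 1 < i \<and> i < length xs \<and> sig xs (i - 1) > sig xs i \<and> sig xs i < sig xs (i + 1)}"

definition rdd :: "nat list \<Rightarrow> nat" where
  "rdd xs = card {i. 1 < i \<and> i \<le> length xs \<and> sig xs (i - 1) > sig xs i \<and> sig xs i > sig xs (i + 1)}"

definition lda :: "nat list \<Rightarrow> nat" where
  "lda xs = card {i. 1 \<le> i \<and> i < length xs \<and> sig xs (i - 1) < sig xs i \<and> sig xs i < sig xs (i + 1)}"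

definition Pn :: "nat \<Rightarrow> 'a::comm_ring_1 \<Rightarrow> 'a \<Rightarrow> 'a \<Rightarrow> 'a \<Rightarrow> 'a \<Rightarrow> 'a \<Rightarrow> 'a" where
  "Pn n u1 u2 u3 u4 \<alpha> \<beta> = (\<Sum>xs \<in> perms (n + 1).
      u1 ^ Vst xs * u2 ^ (Wst xs - 1) * u3 ^ rdd xs * u4 ^ lda xs
      * \<alpha> ^ (LRmax xs - 1) * \<beta> ^ (RLmax xs - 1))"

end

theory Submission
  imports Defs "HOL-Computational_Algebra.Polynomial"
begin

text \<open>
  Every permutation of \<open>[m + 1]\<close> arises exactly once by inserting a new minimum into one of the
  \<open>m + 1\<close> slots of a permutation of \<open>[m]\<close>. In front it adds a double ascent and a left-to-right
  maximum, at the end a double descent and a right-to-left maximum; between two entries it is a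
  new valley and turns one neighbour from double ascent or double descent into a peak, or from a
  valley into a double descent or double ascent. Summing over the slots gives
  \<open>P\<^sub>n\<^sub>+\<^sub>1 = (\<alpha> u\<^sub>4 + \<beta> u\<^sub>3) P\<^sub>n + \<delta> P\<^sub>n\<close> with the derivation
  \<open>\<delta> = u\<^sub>1 (u\<^sub>3 + u\<^sub>4) \<partial>\<^sub>1 + u\<^sub>1 u\<^sub>2 (\<partial>\<^sub>3 + \<partial>\<^sub>4)\<close>, which is computed with dual numbers.

  Put \<open>s = u\<^sub>3 + u\<^sub>4\<close>, \<open>q = u\<^sub>1 u\<^sub>2\<close>, \<open>r = (\<beta> - \<alpha>)(u\<^sub>3 - u\<^sub>4)\<close>, \<open>\<Delta> = s\<^sup>2 - 4q\<close> and
  \<open>(r + \<surd>\<Delta>)\<^sup>n = A\<^sub>n + B\<^sub>n \<surd>\<Delta>\<close>. As \<open>\<alpha> + \<beta> = -1\<close>, \<open>2 (\<alpha> u\<^sub>4 + \<beta> u\<^sub>3) = r - s\<close>; moreover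
  \<open>\<delta> s = 2q\<close> and \<open>\<delta> r = \<delta> \<Delta> = 0\<close>, so \<open>A\<^sub>n - s B\<^sub>n\<close> satisfies the same recurrence as \<open>2\<^sup>n P\<^sub>n\<close>.
  The induction hypothesis can only be differentiated as an identity of polynomials, so the
  induction runs in \<open>'a poly poly poly\<close> with indeterminates for \<open>u\<^sub>1, u\<^sub>3, u\<^sub>4\<close>, and the theorem
  follows by evaluation.
\<close>

section \<open>Dual numbers\<close>

datatype 'a dual = Dual (re: 'a) (eps: 'a)

instantiation dual :: (comm_ring_1) comm_ring_1
begin
definition "0 = Dual 0 0"
definition "1 = Dual 1 0"
definition "x + y = Dual (re x + re y) (eps x + eps y)"
definition "x - y = Dual (re x - re y) (eps x - eps y)"
definition "- x = Dual (- re x) (- eps x)"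
definition "x * y = Dual (re x * re y) (re x * eps y + eps x * re y)"
instance
  by standard (auto simp: zero_dual_def one_dual_def plus_dual_def minus_dual_def
      uminus_dual_def times_dual_def algebra_simps intro: dual.expand)
end

lemma dual_simps [simp]:
  "re 0 = 0" "eps 0 = 0" "re 1 = 1" "eps 1 = 0"
  "re (x + y) = re x + re y" "eps (x + y) = eps x + eps y"
  "re (x - y) = re x - re y" "eps (x - y) = eps x - eps y"
  "re (- x) = - re x" "eps (- x) = - eps x"
  "re (x * y) = re x * re y" "eps (x * y) = re x * eps y + eps x * re y"
  by (simp_all add: zero_dual_def one_dual_def plus_dual_def minus_dual_def
      uminus_dual_def times_dual_def)

lemma re_power [simp]: "re (x ^ k) = re x ^ k"
  by (induction k) auto

lemma eps_power [simp]: "eps (x ^ k) = of_nat k * re x ^ (k - 1) * eps x"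
proof (induction k)
  case (Suc k)
  then show ?case
    by (cases k) (auto simp: algebra_simps)
qed simp

lemma re_of_nat [simp]: "re (of_nat k) = of_nat k" and eps_of_nat [simp]: "eps (of_nat k) = 0"
  by (induction k) simp_all

lemma re_numeral [simp]: "re (numeral k) = numeral k" and eps_numeral [simp]: "eps (numeral k) = 0"
  using re_of_nat[of "numeral k"] eps_of_nat[of "numeral k"] by simp_all

lemma eps_sum: "eps (sum f A) = (\<Sum>x\<in>A. eps (f x))"
  by (induction A rule: infinite_finite_induct) simp_all

locale comm_ring_hom =
  fixes h :: "'a::comm_ring_1 \<Rightarrow> 'b::comm_ring_1"
  assumes hom_add: "h (x + y) = h x + h y"
    and hom_mult: "h (x * y) = h x * h y"
    and hom_1: "h 1 = 1"
begin

lemma hom_0: "h 0 = 0"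
  using hom_add[of 0 0] by simp

lemma hom_uminus: "h (- x) = - h x"
  using hom_add[of x "- x"] hom_0 by (simp add: eq_neg_iff_add_eq_0 add.commute)

lemma hom_diff: "h (x - y) = h x - h y"
  using hom_add[of x "- y"] hom_uminus[of y] by simp

lemma hom_power: "h (x ^ k) = h x ^ k"
  by (induction k) (simp_all add: hom_1 hom_mult)

lemma hom_of_nat: "h (of_nat k) = of_nat k"
  by (induction k) (simp_all add: hom_1 hom_add hom_0)

lemma hom_numeral: "h (numeral k) = numeral k"
  using hom_of_nat[of "numeral k"] by simp

lemma hom_sum: "h (sum f A) = (\<Sum>x\<in>A. h (f x))"
  by (induction A rule: infinite_finite_induct) (simp_all add: hom_0 hom_add)

lemmas hom_simps = hom_add hom_mult hom_1 hom_0 hom_uminus hom_diff hom_power hom_of_nat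
  hom_numeral hom_sum

lemma hom_Pn: "h (Pn n u1 u2 u3 u4 a b) = Pn n (h u1) (h u2) (h u3) (h u4) (h a) (h b)"
  by (simp add: Pn_def hom_simps)

lemma map_poly_hom_add: "map_poly h (p + q) = map_poly h p + map_poly h q"
  by (intro poly_eqI) (simp add: coeff_map_poly hom_simps)

lemma map_poly_hom_mult: "map_poly h (p * q) = map_poly h p * map_poly h q"
  by (intro poly_eqI) (simp add: coeff_map_poly hom_simps coeff_mult)

lemma comm_ring_hom_poly_map_poly: "comm_ring_hom (\<lambda>p. poly (map_poly h p) y)"
  by unfold_locales (simp_all add: map_poly_hom_add map_poly_hom_mult hom_1)

end

lemma comm_ring_hom_id: "comm_ring_hom (\<lambda>x. x)"
  by unfold_locales simp_all

lemma comm_ring_hom_comp: "comm_ring_hom g \<Longrightarrow> comm_ring_hom h \<Longrightarrow> comm_ring_hom (\<lambda>x. g (h x))"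
  by (simp add: comm_ring_hom_def)

lemma comm_ring_hom_Dual: "comm_ring_hom (\<lambda>x. Dual x 0)"
  by unfold_locales (simp_all add: plus_dual_def times_dual_def one_dual_def)

text \<open>\<open>'a poly poly poly\<close> serves as the polynomial ring over \<open>'a\<close> in the indeterminates
  \<open>U1\<close>, \<open>U3\<close>, \<open>U4\<close> (for \<open>u\<^sub>1, u\<^sub>3, u\<^sub>4\<close>); \<open>u\<^sub>2\<close>, \<open>\<alpha>\<close>, \<open>\<beta>\<close> enter as constants via \<open>C3\<close>.\<close>

definition eval3 :: "('a::comm_ring_1 \<Rightarrow> 'b::comm_ring_1) \<Rightarrow> 'b \<Rightarrow> 'b \<Rightarrow> 'b \<Rightarrow> 'a poly poly poly \<Rightarrow> 'b" where
  "eval3 h y1 y3 y4 p = poly (map_poly (\<lambda>q. poly (map_poly (\<lambda>r. poly (map_poly h r) y1) q) y3) p) y4"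

definition C3 :: "'a::comm_ring_1 \<Rightarrow> 'a poly poly poly" where "C3 a = [:[:[:a:]:]:]"
definition U1 :: "'a::comm_ring_1 poly poly poly" where "U1 = [:[:[:0, 1:]:]:]"
definition U3 :: "'a::comm_ring_1 poly poly poly" where "U3 = [:[:0, 1:]:]"
definition U4 :: "'a::comm_ring_1 poly poly poly" where "U4 = [:0, 1:]"

lemma comm_ring_hom_C3: "comm_ring_hom C3"
  by unfold_locales (simp_all add: C3_def one_pCons)

context comm_ring_hom
begin

lemma comm_ring_hom_eval3: "comm_ring_hom (eval3 h y1 y3 y4)"
  unfolding eval3_def
  by (intro comm_ring_hom.comm_ring_hom_poly_map_poly comm_ring_hom_poly_map_poly)

lemma eval3_C3 [simp]: "eval3 h y1 y3 y4 (C3 a) = h a"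
  and eval3_U1 [simp]: "eval3 h y1 y3 y4 U1 = y1"
  and eval3_U3 [simp]: "eval3 h y1 y3 y4 U3 = y3"
  and eval3_U4 [simp]: "eval3 h y1 y3 y4 U4 = y4"
  using comm_ring_hom.hom_0[OF comm_ring_hom_poly_map_poly] comm_ring_hom.hom_1[OF comm_ring_hom_poly_map_poly]
  by (simp_all add: eval3_def C3_def U1_def U3_def U4_def hom_0 hom_1 map_poly_pCons)

end

lemma sum_lessThan_add: "(\<Sum>i<a + b. f i) = (\<Sum>i<a. f i) + (\<Sum>i<b. f (a + i))"
  for f :: "nat \<Rightarrow> 'a::comm_monoid_add"
  by (induction b) (simp_all add: add.assoc)

lemma sum_lessThan_splice:
  fixes g h :: "nat \<Rightarrow> 'a::comm_monoid_add"
  assumes "p \<le> N" "\<And>i. i < p \<Longrightarrow> g i = h i" "\<And>i. g (p + k + i) = h (p + j + i)"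
  shows "(\<Sum>i<N + k. g i) + (\<Sum>i<j. h (p + i)) = (\<Sum>i<N + j. h i) + (\<Sum>i<k. g (p + i))"
proof -
  have "N + k = p + (k + (N - p))" "N + j = p + (j + (N - p))"
    using assms(1) by simp_all
  then have "(\<Sum>i<N + k. g i) = (\<Sum>i<p. g i) + ((\<Sum>i<k. g (p + i)) + (\<Sum>i<N - p. g (p + k + i)))"
    and "(\<Sum>i<N + j. h i) = (\<Sum>i<p. h i) + ((\<Sum>i<j. h (p + i)) + (\<Sum>i<N - p. h (p + j + i)))"
    by (simp_all only: sum_lessThan_add add.assoc)
  then show ?thesis
    using assms(2,3) by (simp add: ac_simps)
qed

lemma sum_of_bool_mult_const:
  "finite A \<Longrightarrow> (\<Sum>x\<in>A. of_bool (P x) * c) = of_nat (card {x \<in> A. P x}) * (c :: 'a::comm_semiring_1)"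
  by (simp add: Int_def)

lemma sum_choose_Suc:
  fixes f :: "nat \<Rightarrow> 'a::comm_ring_1"
  shows "(\<Sum>j\<le>Suc n. of_nat (Suc n choose j) * f j) =
    (\<Sum>j\<le>n. of_nat (n choose j) * f j) + (\<Sum>j\<le>n. of_nat (n choose j) * f (Suc j))"
proof -
  have "(\<Sum>j\<le>Suc n. of_nat (Suc n choose j) * f j) = f 0 + (\<Sum>j\<le>n. of_nat (Suc n choose Suc j) * f (Suc j))"
    by (subst sum.atMost_Suc_shift) simp
  also have "\<dots> = f 0 + (\<Sum>j\<le>n. of_nat (n choose Suc j) * f (Suc j)) + (\<Sum>j\<le>n. of_nat (n choose j) * f (Suc j))"
    by (simp add: sum.distrib algebra_simps)
  also have "f 0 + (\<Sum>j\<le>n. of_nat (n choose Suc j) * f (Suc j)) = (\<Sum>j\<le>Suc n. of_nat (n choose j) * f j)"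
    by (subst sum.atMost_Suc_shift) simp
  also have "\<dots> = (\<Sum>j\<le>n. of_nat (n choose j) * f j)"
    by (simp add: binomial_eq_0)
  finally show ?thesis .
qed

lemma sum_even_indices:
  fixes F :: "nat \<Rightarrow> 'a::comm_monoid_add"
  shows "(\<Sum>j\<le>n. if even j then F j else 0) = (\<Sum>k = 0..n div 2. F (2 * k))"
proof -
  have "(\<Sum>k = 0..n div 2. F (2 * k)) = sum F ((\<lambda>k. 2 * k) ` {0..n div 2})"
    by (simp add: sum.reindex inj_on_def)
  also have "(\<lambda>k. 2 * k) ` {0..n div 2} = {j \<in> {..n}. even j}"
    by (auto elim!: evenE)
  also have "sum F {j \<in> {..n}. even j} = (\<Sum>j\<le>n. if even j then F j else 0)"
    by (rule sum.inter_filter) simp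
  finally show ?thesis ..
qed

lemma sum_odd_indices:
  fixes F :: "nat \<Rightarrow> 'a::comm_monoid_add"
  shows "(\<Sum>j\<le>Suc n. if odd j then F j else 0) = (\<Sum>k = 0..n div 2. F (2 * k + 1))"
proof -
  have "(\<Sum>k = 0..n div 2. F (2 * k + 1)) = sum F ((\<lambda>k. 2 * k + 1) ` {0..n div 2})"
    by (simp add: sum.reindex inj_on_def)
  also have "(\<lambda>k. 2 * k + 1) ` {0..n div 2} = {j \<in> {..Suc n}. odd j}"
    by (auto elim!: oddE)
  also have "sum F {j \<in> {..Suc n}. odd j} = (\<Sum>j\<le>Suc n. if odd j then F j else 0)"
    by (rule sum.inter_filter) simp
  finally show ?thesis ..
qed

text \<open>\<open>(r + \<surd>D)\<^sup>n = sqrt_pow_fst n r D + sqrt_pow_snd n r D * \<surd>D\<close>.\<close>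

definition sqrt_pow_fst :: "nat \<Rightarrow> 'a::comm_ring_1 \<Rightarrow> 'a \<Rightarrow> 'a" where
  "sqrt_pow_fst n r D = (\<Sum>j\<le>n. of_nat (n choose j) * (if even j then D ^ (j div 2) * r ^ (n - j) else 0))"

definition sqrt_pow_snd :: "nat \<Rightarrow> 'a::comm_ring_1 \<Rightarrow> 'a \<Rightarrow> 'a" where
  "sqrt_pow_snd n r D = (\<Sum>j\<le>n. of_nat (n choose j) * (if odd j then D ^ (j div 2) * r ^ (n - j) else 0))"

lemma sqrt_pow_fst_0 [simp]: "sqrt_pow_fst 0 r D = 1"
  by (simp add: sqrt_pow_fst_def)

lemma sqrt_pow_snd_0 [simp]: "sqrt_pow_snd 0 r D = 0"
  by (simp add: sqrt_pow_snd_def)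

lemma sqrt_pow_fst_Suc: "sqrt_pow_fst (Suc n) r D = r * sqrt_pow_fst n r D + D * sqrt_pow_snd n r D"
proof -
  have "(\<Sum>j\<le>n. of_nat (n choose j) * (if even j then D ^ (j div 2) * r ^ (Suc n - j) else 0))
     = r * sqrt_pow_fst n r D"
    unfolding sqrt_pow_fst_def sum_distrib_left
    by (rule sum.cong) (auto simp: Suc_diff_le algebra_simps)
  moreover have "(\<Sum>j\<le>n. of_nat (n choose j)
      * (if even (Suc j) then D ^ (Suc j div 2) * r ^ (Suc n - Suc j) else 0)) = D * sqrt_pow_snd n r D"
    unfolding sqrt_pow_snd_def sum_distrib_left
    by (rule sum.cong) (auto simp: algebra_simps elim: oddE)
  ultimately show ?thesis
    unfolding sqrt_pow_fst_def[of "Suc n"] sum_choose_Suc by simp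
qed

lemma sqrt_pow_snd_Suc: "sqrt_pow_snd (Suc n) r D = sqrt_pow_fst n r D + r * sqrt_pow_snd n r D"
proof -
  have "(\<Sum>j\<le>n. of_nat (n choose j) * (if odd j then D ^ (j div 2) * r ^ (Suc n - j) else 0))
     = r * sqrt_pow_snd n r D"
    unfolding sqrt_pow_snd_def sum_distrib_left
    by (rule sum.cong) (auto simp: Suc_diff_le algebra_simps)
  moreover have "(\<Sum>j\<le>n. of_nat (n choose j)
      * (if odd (Suc j) then D ^ (Suc j div 2) * r ^ (Suc n - Suc j) else 0)) = sqrt_pow_fst n r D"
    unfolding sqrt_pow_fst_def
    by (rule sum.cong) (auto simp: algebra_simps elim: evenE)
  ultimately show ?thesis
    unfolding sqrt_pow_snd_def[of "Suc n"] sum_choose_Suc by (simp add: add.commute)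
qed

lemma sqrt_pow_fst_eq:
  "sqrt_pow_fst n (x * y) D = (\<Sum>k = 0..n div 2. of_nat (n choose (2*k)) * D ^ k * x ^ (n - 2*k) * y ^ (n - 2*k))"
proof -
  have "sqrt_pow_fst n (x * y) D
      = (\<Sum>j\<le>n. if even j then of_nat (n choose j) * (D ^ (j div 2) * (x * y) ^ (n - j)) else 0)"
    unfolding sqrt_pow_fst_def by (rule sum.cong) auto
  then show ?thesis
    by (simp only: sum_even_indices) (simp add: power_mult_distrib mult.assoc)
qed

lemma sqrt_pow_snd_eq:
  "sqrt_pow_snd n (x * y) D = (\<Sum>k = 0..n div 2. of_nat (n choose (2*k+1)) * D ^ k
      * x ^ (n - 2*k - 1) * y ^ (n - 2*k - 1))"
proof -
  have "sqrt_pow_snd n (x * y) D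
      = (\<Sum>j\<le>Suc n. if odd j then of_nat (n choose j) * (D ^ (j div 2) * (x * y) ^ (n - j)) else 0)"
    unfolding sqrt_pow_snd_def by (simp add: binomial_eq_0) (rule sum.cong, auto)
  then show ?thesis
    by (simp only: sum_odd_indices) (simp add: power_mult_distrib mult.assoc)
qed

lemma (in comm_ring_hom) hom_sqrt_pow:
  "h (sqrt_pow_fst n r D) = sqrt_pow_fst n (h r) (h D)"
  "h (sqrt_pow_snd n r D) = sqrt_pow_snd n (h r) (h D)"
  by (simp_all add: sqrt_pow_fst_def sqrt_pow_snd_def hom_simps if_distrib cong: if_cong)

lemma eps_sqrt_pow_closed_form:
  "eps (sqrt_pow_fst n (Dual r 0) (Dual D 0) - Dual s e * sqrt_pow_snd n (Dual r 0) (Dual D 0))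
    = - (e * sqrt_pow_snd n r D)"
  unfolding comm_ring_hom.hom_sqrt_pow[OF comm_ring_hom_Dual, of n r D, symmetric] by simp

lemma sig_0 [simp]: "sig xs 0 = 0"
  by (simp add: sig_def)

lemma sig_beyond: "length xs < i \<Longrightarrow> sig xs i = 0"
  by (simp add: sig_def)

lemma sig_pos_iff:
  assumes "0 \<notin> set xs"
  shows "0 < sig xs i \<longleftrightarrow> 1 \<le> i \<and> i \<le> length xs"
proof -
  have "xs ! (i - 1) \<in> set xs" if "1 \<le> i" "i \<le> length xs"
    using that by (intro nth_mem) arith
  then have "xs ! (i - 1) \<noteq> 0" if "1 \<le> i" "i \<le> length xs"
    using that assms by metis
  then show ?thesis
    by (auto simp: sig_def)
qed

lemma sig_inj:
  assumes "distinct xs" "0 \<notin> set xs" "sig xs i = sig xs j" "0 < sig xs i"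
  shows "i = j"
proof -
  have "1 \<le> i" "i \<le> length xs" "1 \<le> j" "j \<le> length xs"
    using assms sig_pos_iff[of xs i] sig_pos_iff[of xs j] by auto
  then show ?thesis
    using assms by (simp add: sig_def nth_eq_iff_index_eq)
qed

lemma sig_neq_Suc:
  assumes "distinct xs" "0 \<notin> set xs" "0 < sig xs i \<or> 0 < sig xs (Suc i)"
  shows "sig xs i \<noteq> sig xs (Suc i)"
  using sig_inj[OF assms(1,2), of i "Suc i"] assms(3) by auto

lemma sig_less_imp_in_range: "0 \<notin> set xs \<Longrightarrow> sig xs i < sig xs j \<Longrightarrow> 1 \<le> j \<and> j \<le> length xs"
  using sig_pos_iff[of xs j] by simp

lemma perms_D:
  assumes "xs \<in> perms m"
  shows "distinct xs" "0 \<notin> set xs" "length xs = m" "set xs = {1..m}"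
  using assms distinct_card[of xs] by (auto simp: perms_def)

lemma sig_le: "xs \<in> perms m \<Longrightarrow> sig xs j \<le> m"
  using perms_D[of xs m] nth_mem[of "j - 1" xs] by (auto simp: sig_def)

section \<open>Inserting a new minimum\<close>

definition bump :: "nat \<Rightarrow> nat" where
  "bump v = (if v = 0 then 0 else Suc v)"

lemma bump_less_iff [simp]: "bump a < bump b \<longleftrightarrow> a < b"
  and bump_eq_0_iff [simp]: "bump v = 0 \<longleftrightarrow> v = 0"
  and bump_less_1_iff [simp]: "bump v < Suc 0 \<longleftrightarrow> v = 0"
  and one_less_bump_iff [simp]: "Suc 0 < bump v \<longleftrightarrow> 0 < v"
  and zero_less_bump_iff [simp]: "0 < bump v \<longleftrightarrow> 0 < v"
  and bump_0 [simp]: "bump 0 = 0"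
  by (auto simp: bump_def)

definition insert_min :: "nat \<Rightarrow> nat list \<Rightarrow> nat list" where
  "insert_min p xs = take p (map Suc xs) @ 1 # drop p (map Suc xs)"

definition skip :: "nat \<Rightarrow> nat \<Rightarrow> nat" where
  "skip p i = (if i \<le> p then i else Suc i)"

lemma skip_less_iff [simp]: "skip p i < skip p j \<longleftrightarrow> i < j"
  by (auto simp: skip_def)

lemma inj_skip: "inj (skip p)"
  by (auto simp: inj_def skip_def split: if_splits)

lemma range_skip: "range (skip p) = - {Suc p}"
proof -
  have "i \<in> range (skip p) \<longleftrightarrow> i \<noteq> Suc p" for i
  proof
    assume "i \<noteq> Suc p"
    then have "i = skip p (if i \<le> p then i else i - 1)"
      by (auto simp: skip_def)
    then show "i \<in> range (skip p)"
      by (rule range_eqI)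
  qed (auto simp: skip_def)
  then show ?thesis
    by auto
qed

lemma image_skip_atMost: "p \<le> N \<Longrightarrow> skip p ` {..N} = {..Suc N} - {Suc p}"
proof (intro set_eqI iffI)
  fix i
  assume "p \<le> N" "i \<in> {..Suc N} - {Suc p}"
  then have "i = skip p (if i \<le> p then i else i - 1)" "(if i \<le> p then i else i - 1) \<le> N"
    by (auto simp: skip_def)
  then show "i \<in> skip p ` {..N}"
    by blast
qed (auto simp: skip_def)

lemma card_skip:
  assumes "p \<le> N"
  shows "card {i \<in> {..Suc N}. P i} = card {i \<in> {..N}. P (skip p i)} + of_bool (P (Suc p))"
proof -
  define S where "S = {i \<in> {..N}. P (skip p i)}"
  have "{i \<in> {..Suc N}. P i} = skip p ` S \<union> {i \<in> {Suc p}. P i}"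
    using image_skip_atMost[OF assms] assms unfolding S_def by auto
  moreover have "skip p ` S \<inter> {i \<in> {Suc p}. P i} = {}"
    using range_skip[of p] by auto
  ultimately have "card {i \<in> {..Suc N}. P i} = card (skip p ` S) + card {i \<in> {Suc p}. P i}"
    by (simp add: card_Un_disjoint S_def)
  moreover have "{i \<in> {Suc p}. P i} = (if P (Suc p) then {Suc p} else {})"
    by auto
  ultimately show ?thesis
    unfolding S_def by (simp add: card_image inj_on_subset[OF inj_skip])
qed

lemma length_insert_min [simp]: "p \<le> length xs \<Longrightarrow> length (insert_min p xs) = Suc (length xs)"
  by (simp add: insert_min_def)

lemma zero_notin_insert_min: "0 \<notin> set (insert_min p xs)"
  by (auto simp: insert_min_def dest: in_set_takeD in_set_dropD)

lemma sig_insert_min: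
  assumes "p \<le> length xs" "0 \<notin> set xs"
  shows "sig (insert_min p xs) i =
    (if i \<le> p then bump (sig xs i) else if i = Suc p then 1 else bump (sig xs (i - 1)))"
proof -
  have nz: "xs ! k \<noteq> 0" if "k < length xs" for k
    using assms(2) that by (metis nth_mem)
  consider "i = 0" | "1 \<le> i \<and> i \<le> p" | "i = Suc p" | "Suc p < i \<and> i \<le> Suc (length xs)"
    | "Suc (length xs) < i"
    by linarith
  then show ?thesis
  proof cases
    case 2
    then have "i - 1 < p"
      by linarith
    then have "insert_min p xs ! (i - 1) = Suc (xs ! (i - 1))"
      using assms(1) by (simp add: insert_min_def nth_append)
    then show ?thesis
      using 2 assms(1) nz[of "i - 1"] by (auto simp: sig_def bump_def)
  next
    case 3
    then show ?thesis
      using assms(1) by (simp add: sig_def insert_min_def nth_append)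
  next
    case 4
    define j where "j = i - 2"
    have j: "i = Suc (Suc j)" "p \<le> j" "j < length xs"
      using 4 unfolding j_def by arith+
    then have "insert_min p xs ! Suc j = Suc (xs ! j)"
      using assms(1) by (simp add: insert_min_def nth_append Suc_diff_le)
    then show ?thesis
      using j nz[of j] by (simp add: sig_def bump_def)
  qed (use assms(1) in \<open>simp_all add: sig_beyond\<close>)
qed

lemma sig_insert_min_skip:
  "p \<le> length xs \<Longrightarrow> 0 \<notin> set xs \<Longrightarrow> sig (insert_min p xs) (skip p i) = bump (sig xs i)"
  by (simp add: sig_insert_min skip_def)

lemma sig_insert_min_slot: "p \<le> length xs \<Longrightarrow> 0 \<notin> set xs \<Longrightarrow> sig (insert_min p xs) (Suc p) = 1"
  by (simp add: sig_insert_min)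

lemma insert_min_in_perms:
  assumes "xs \<in> perms m" "p \<le> m"
  shows "insert_min p xs \<in> perms (Suc m)"
proof -
  have d: "distinct (map Suc xs)" and s: "set xs = {1..m}"
    using perms_D[OF assms(1)] by (auto simp: distinct_map)
  then have "distinct (insert_min p xs)"
    using set_take_disj_set_drop_if_distinct[OF d, of p p] unfolding insert_min_def
    by (auto simp: distinct_append dest: in_set_takeD in_set_dropD)
  moreover have "set (insert_min p xs) = insert 1 (Suc ` set xs)"
  proof -
    have "set (insert_min p xs) = insert 1 (set (take p (map Suc xs)) \<union> set (drop p (map Suc xs)))"
      by (simp add: insert_min_def)
    then show ?thesis
      by (metis set_append append_take_drop_id set_map)
  qed
  moreover have "insert 1 (Suc ` {1..m}) = {1..Suc m}"
    by (auto simp: image_iff)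
  ultimately show ?thesis
    unfolding perms_def using s by simp
qed

lemma insert_min_inj:
  assumes "xs \<in> perms m" "ys \<in> perms m" "p \<le> m" "q \<le> m" "insert_min p xs = insert_min q ys"
  shows "p = q" "xs = ys"
proof -
  have l: "length xs = m" "length ys = m"
    using perms_D assms(1,2) by auto
  have "distinct (insert_min p xs)"
    using insert_min_in_perms[OF assms(1,3)] unfolding perms_def by simp
  moreover have "insert_min p xs ! p = 1" "insert_min q ys ! q = 1"
    using l assms(3,4) by (simp_all add: insert_min_def nth_append)
  ultimately show "p = q"
    using assms(3,4,5) l nth_eq_iff_index_eq[of "insert_min p xs" p q] by simp
  then have "take p (map Suc xs) = take p (map Suc ys) \<and> drop p (map Suc xs) = drop p (map Suc ys)"
    using assms(5) l unfolding insert_min_def by (subst (asm) append_eq_append_conv) auto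
  then have "map Suc xs = map Suc ys"
    by (metis append_take_drop_id)
  then show "xs = ys"
    by (simp add: inj_map_eq_map)
qed

lemma insert_min_surj:
  assumes "zs \<in> perms (Suc m)"
  obtains xs p where "xs \<in> perms m" "p \<le> m" "zs = insert_min p xs"
proof -
  have d: "distinct zs" and s: "set zs = {1..Suc m}" and l: "length zs = Suc m"
    using perms_D[OF assms] by auto
  have "1 \<in> set zs"
    using s by simp
  then obtain p where p: "p < length zs" "zs ! p = 1"
    by (auto simp: in_set_conv_nth)
  define ws where "ws = take p zs @ drop (Suc p) zs"
  have zs: "zs = take p zs @ 1 # drop (Suc p) zs"
    using p id_take_nth_drop[of p zs] by simp
  then have "distinct (take p zs @ 1 # drop (Suc p) zs)"
    using d by metis
  then have "distinct ws" "1 \<notin> set ws"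
    unfolding ws_def by (auto simp: distinct_append)
  moreover have "set zs = insert 1 (set ws)"
    using zs unfolding ws_def by (metis set_append set_simps(2) Un_insert_right)
  ultimately have dws: "distinct ws" and "set ws = {1..Suc m} - {1}"
    using s by auto
  moreover have "{1..Suc m} - {1} = {2..Suc m}"
    by auto
  ultimately have sws: "set ws = {2..Suc m}"
    by simp
  define xs where "xs = map (\<lambda>x. x - 1) ws"
  have mws: "map Suc xs = ws"
    unfolding xs_def map_map by (rule map_idI) (use sws in auto)
  have "set xs = (\<lambda>x. x - 1) ` {2..Suc m}"
    unfolding xs_def using sws by simp
  also have "\<dots> = {1..m}"
    by (auto simp: image_iff intro!: bexI[of _ "Suc _"])
  moreover have "distinct xs"
    using dws mws by (metis distinct_map)
  ultimately have "xs \<in> perms m"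
    unfolding perms_def by simp
  moreover have "zs = insert_min p xs"
    using zs p unfolding insert_min_def mws ws_def by simp
  ultimately show ?thesis
    using that p l by (metis less_Suc_eq_le)
qed

lemma sum_perms_Suc:
  "(\<Sum>zs\<in>perms (Suc m). f zs) = (\<Sum>xs\<in>perms m. \<Sum>p\<le>m. f (insert_min p xs))"
proof -
  have "perms (Suc m) = (\<lambda>(xs, p). insert_min p xs) ` (perms m \<times> {..m})"
    by (auto simp: insert_min_in_perms elim: insert_min_surj)
  moreover have "inj_on (\<lambda>(xs, p). insert_min p xs) (perms m \<times> {..m})"
    by (auto simp: inj_on_def dest: insert_min_inj)
  ultimately have "(\<Sum>zs\<in>perms (Suc m). f zs) = (\<Sum>(xs, p)\<in>perms m \<times> {..m}. f (insert_min p xs))"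
    by (simp add: sum.reindex case_prod_unfold)
  then show ?thesis
    by (simp add: sum.cartesian_product)
qed

definition record_at :: "(nat \<Rightarrow> nat \<Rightarrow> bool) \<Rightarrow> nat list \<Rightarrow> nat \<Rightarrow> bool" where
  "record_at R xs i \<longleftrightarrow> 0 < sig xs i \<and> (\<forall>j. R j i \<longrightarrow> sig xs j < sig xs i)"

lemma LRmax_eq_card_record:
  assumes "0 \<notin> set xs"
  shows "LRmax xs = card {i \<in> {..length xs}. record_at (<) xs i}"
proof -
  have "{i \<in> {1..length xs}. \<forall>j \<in> {1..<i}. sig xs j < sig xs i} = {i \<in> {..length xs}. record_at (<) xs i}"
  proof (intro set_eqI iffI)
    fix i
    assume "i \<in> {i \<in> {1..length xs}. \<forall>j \<in> {1..<i}. sig xs j < sig xs i}"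
    then have i: "1 \<le> i" "i \<le> length xs" "\<forall>j \<in> {1..<i}. sig xs j < sig xs i" and pos: "0 < sig xs i"
      using sig_pos_iff[OF assms] by auto
    have "sig xs j < sig xs i" if "j < i" for j
      using i(3) that pos by (cases "j = 0") auto
    then show "i \<in> {i \<in> {..length xs}. record_at (<) xs i}"
      using i pos by (simp add: record_at_def)
  qed (use sig_pos_iff[OF assms] in \<open>auto simp: record_at_def\<close>)
  then show ?thesis
    by (simp add: LRmax_def)
qed

lemma RLmax_eq_card_record:
  assumes "0 \<notin> set xs"
  shows "RLmax xs = card {i \<in> {..length xs}. record_at (>) xs i}"
proof -
  have "{i \<in> {1..length xs}. \<forall>j \<in> {i<..length xs}. sig xs j < sig xs i} = {i \<in> {..length xs}. record_at (>) xs i}"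
  proof (intro set_eqI iffI)
    fix i
    assume "i \<in> {i \<in> {1..length xs}. \<forall>j \<in> {i<..length xs}. sig xs j < sig xs i}"
    then have i: "1 \<le> i" "i \<le> length xs" "\<forall>j \<in> {i<..length xs}. sig xs j < sig xs i" and pos: "0 < sig xs i"
      using sig_pos_iff[OF assms] by auto
    have "sig xs j < sig xs i" if "i < j" for j
      using i(3) that pos by (cases "j \<le> length xs") (auto simp: sig_beyond)
    then show "i \<in> {i \<in> {..length xs}. record_at (>) xs i}"
      using i pos by (simp add: record_at_def)
  qed (use sig_pos_iff[OF assms] in \<open>auto simp: record_at_def\<close>)
  then show ?thesis
    by (simp add: RLmax_def)
qed

lemma record_at_insert_min_skip:
  assumes p: "p \<le> length xs" and nz: "0 \<notin> set xs"
    and R: "\<And>i j. R (skip p i) (skip p j) \<longleftrightarrow> R i j"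
  shows "record_at R (insert_min p xs) (skip p k) \<longleftrightarrow> record_at R xs k"
proof
  assume k: "record_at R (insert_min p xs) (skip p k)"
  have "sig xs j < sig xs k" if "R j k" for j
    using k that R[of j k] by (auto simp: record_at_def sig_insert_min_skip[OF p nz]
        dest: spec[of _ "skip p j"])
  then show "record_at R xs k"
    using k by (simp add: record_at_def sig_insert_min_skip[OF p nz])
next
  assume k: "record_at R xs k"
  have "sig (insert_min p xs) j < bump (sig xs k)" if "R j (skip p k)" for j
  proof (cases "j = Suc p")
    case True
    then show ?thesis
      using k by (simp add: record_at_def sig_insert_min_slot[OF p nz])
  next
    case False
    then obtain j' where "j = skip p j'"
      using range_skip[of p] by blast
    then show ?thesis
      using k that R by (auto simp: record_at_def sig_insert_min_skip[OF p nz])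
  qed
  then show "record_at R (insert_min p xs) (skip p k)"
    using k by (simp add: record_at_def sig_insert_min_skip[OF p nz])
qed

lemma LRmax_insert_min:
  assumes p: "p \<le> length xs" and nz: "0 \<notin> set xs"
  shows "LRmax (insert_min p xs) = LRmax xs + of_bool (p = 0)"
proof -
  have "record_at (<) (insert_min p xs) (Suc p) \<longleftrightarrow> (\<forall>j\<le>p. sig xs j = 0)"
    by (simp add: record_at_def sig_insert_min[OF p nz] less_Suc_eq_le)
  also have "\<dots> \<longleftrightarrow> p = 0"
    using sig_pos_iff[OF nz, of p] p by auto
  finally have slot: "record_at (<) (insert_min p xs) (Suc p) \<longleftrightarrow> p = 0" .
  have "LRmax (insert_min p xs) = card {i \<in> {..Suc (length xs)}. record_at (<) (insert_min p xs) i}"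
    using p by (simp add: LRmax_eq_card_record zero_notin_insert_min)
  also have "\<dots> = card {i \<in> {..length xs}. record_at (<) (insert_min p xs) (skip p i)}
      + of_bool (record_at (<) (insert_min p xs) (Suc p))"
    by (rule card_skip[OF p])
  finally show ?thesis
    unfolding slot by (simp add: record_at_insert_min_skip[OF p nz] LRmax_eq_card_record[OF nz])
qed

lemma RLmax_insert_min:
  assumes p: "p \<le> length xs" and nz: "0 \<notin> set xs"
  shows "RLmax (insert_min p xs) = RLmax xs + of_bool (p = length xs)"
proof -
  have "record_at (>) (insert_min p xs) (Suc p) \<longleftrightarrow> (\<forall>j>Suc p. sig xs (j - 1) = 0)"
    by (simp add: record_at_def sig_insert_min[OF p nz])
  also have "\<dots> \<longleftrightarrow> p = length xs"
    using sig_pos_iff[OF nz, of "Suc p"] p sig_beyond[of xs] by (auto dest: spec[of _ "Suc (Suc p)"])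
  finally have slot: "record_at (>) (insert_min p xs) (Suc p) \<longleftrightarrow> p = length xs" .
  have "RLmax (insert_min p xs) = card {i \<in> {..Suc (length xs)}. record_at (>) (insert_min p xs) i}"
    using p by (simp add: RLmax_eq_card_record zero_notin_insert_min)
  also have "\<dots> = card {i \<in> {..length xs}. record_at (>) (insert_min p xs) (skip p i)}
      + of_bool (record_at (>) (insert_min p xs) (Suc p))"
    by (rule card_skip[OF p])
  finally show ?thesis
    unfolding slot by (simp add: record_at_insert_min_skip[OF p nz] RLmax_eq_card_record[OF nz])
qed

lemma LRmax_pos:
  assumes "xs \<in> perms m" "1 \<le> m"
  shows "0 < LRmax xs"
proof -
  have "record_at (<) xs 1"
    using assms perms_D(2,3)[OF assms(1)] by (simp add: record_at_def sig_pos_iff)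
  then show ?thesis
    using assms perms_D(2,3)[OF assms(1)] by (auto simp: LRmax_eq_card_record card_gt_0_iff)
qed

lemma RLmax_pos:
  assumes "xs \<in> perms m" "1 \<le> m"
  shows "0 < RLmax xs"
proof -
  have "record_at (>) xs m"
    using assms perms_D(2,3)[OF assms(1)] by (simp add: record_at_def sig_pos_iff sig_beyond)
  then show ?thesis
    using assms perms_D(2,3)[OF assms(1)] by (auto simp: RLmax_eq_card_record card_gt_0_iff)
qed

definition valley :: "nat \<Rightarrow> nat \<Rightarrow> nat \<Rightarrow> bool" where
  "valley x y z \<longleftrightarrow> y < x \<and> y < z"

definition peak :: "nat \<Rightarrow> nat \<Rightarrow> nat \<Rightarrow> bool" where
  "peak x y z \<longleftrightarrow> x < y \<and> z < y"

definition double_descent :: "nat \<Rightarrow> nat \<Rightarrow> nat \<Rightarrow> bool" where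
  "double_descent x y z \<longleftrightarrow> y < x \<and> z < y"

definition double_ascent :: "nat \<Rightarrow> nat \<Rightarrow> nat \<Rightarrow> bool" where
  "double_ascent x y z \<longleftrightarrow> x < y \<and> y < z"

lemmas pattern_defs = valley_def peak_def double_descent_def double_ascent_def

definition pattern_at :: "(nat \<Rightarrow> nat \<Rightarrow> nat \<Rightarrow> bool) \<Rightarrow> nat list \<Rightarrow> nat \<Rightarrow> bool" where
  "pattern_at T xs i \<longleftrightarrow> T (sig xs (i - 1)) (sig xs i) (sig xs (Suc i))"

definition pattern_count :: "(nat \<Rightarrow> nat \<Rightarrow> nat \<Rightarrow> bool) \<Rightarrow> nat list \<Rightarrow> nat" where
  "pattern_count T xs = (\<Sum>i<length xs + 2. of_bool (pattern_at T xs i))"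

lemma pattern_count_eq_card: "pattern_count T xs = card {i \<in> {..<length xs + 2}. pattern_at T xs i}"
  by (simp only: pattern_count_def card_eq_sum sum.inter_filter[OF finite_lessThan] of_bool_def)

lemma Vst_eq_pattern_count: "0 \<notin> set xs \<Longrightarrow> Vst xs = pattern_count valley xs"
  unfolding Vst_def pattern_count_eq_card pattern_at_def valley_def
  by (rule arg_cong[of _ _ card]) (auto dest: sig_less_imp_in_range)

lemma Wst_eq_pattern_count: "0 \<notin> set xs \<Longrightarrow> Wst xs = pattern_count peak xs"
  unfolding Wst_def pattern_count_eq_card pattern_at_def peak_def
  by (rule arg_cong[of _ _ card]) (auto dest: sig_less_imp_in_range)

lemma rdd_eq_pattern_count: "0 \<notin> set xs \<Longrightarrow> rdd xs = pattern_count double_descent xs"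
  unfolding rdd_def pattern_count_eq_card pattern_at_def double_descent_def
  by (rule arg_cong[of _ _ card]) (auto dest: sig_less_imp_in_range)

lemma lda_eq_pattern_count: "0 \<notin> set xs \<Longrightarrow> lda xs = pattern_count double_ascent xs"
  unfolding lda_def pattern_count_eq_card pattern_at_def double_ascent_def
  by (rule arg_cong[of _ _ card]) (auto dest: sig_less_imp_in_range)

text \<open>The windows centred at \<open>p, p + 1\<close> of \<open>xs\<close> are replaced by the windows centred at
  \<open>p, p + 1, p + 2\<close> of \<open>insert_min p xs\<close>; all other windows only see \<open>bump\<close>ed values.\<close>

lemma pattern_count_insert_min:
  assumes p: "p \<le> length xs" and nz: "0 \<notin> set xs"
    and T: "\<And>x y z. T (bump x) (bump y) (bump z) \<longleftrightarrow> T x y z"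
  shows "pattern_count T (insert_min p xs) + (of_bool (pattern_at T xs p) + of_bool (pattern_at T xs (Suc p)))
    = pattern_count T xs + (of_bool (T (bump (sig xs (p - 1))) (bump (sig xs p)) 1)
      + of_bool (T (bump (sig xs p)) 1 (bump (sig xs (Suc p))))
      + of_bool (T 1 (bump (sig xs (Suc p))) (bump (sig xs (Suc (Suc p))))))"
proof -
  have len: "length (insert_min p xs) + 2 = length xs + 3"
    using p by simp
  have "pattern_count T (insert_min p xs) + (\<Sum>i<2. of_bool (pattern_at T xs (p + i)))
      = pattern_count T xs + (\<Sum>i<3. of_bool (pattern_at T (insert_min p xs) (p + i)))"
    unfolding pattern_count_def len
    by (rule sum_lessThan_splice) (use p in \<open>simp_all add: pattern_at_def sig_insert_min[OF p nz] T T[of 0, simplified]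
        numeral_3_eq_3\<close>)
  then show ?thesis
    using p by (simp add: numeral_3_eq_3 numeral_2_eq_2 pattern_at_def sig_insert_min[OF p nz] add.assoc)
qed

lemma valley_bump: "valley (bump x) (bump y) (bump z) \<longleftrightarrow> valley x y z"
  and peak_bump: "peak (bump x) (bump y) (bump z) \<longleftrightarrow> peak x y z"
  and double_descent_bump: "double_descent (bump x) (bump y) (bump z) \<longleftrightarrow> double_descent x y z"
  and double_ascent_bump: "double_ascent (bump x) (bump y) (bump z) \<longleftrightarrow> double_ascent x y z"
  by (simp_all add: pattern_defs)

definition pattern_counts :: "nat list \<Rightarrow> nat \<times> nat \<times> nat \<times> nat" where
  "pattern_counts xs = (pattern_count valley xs, pattern_count peak xs,
     pattern_count double_descent xs, pattern_count double_ascent xs)"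

lemmas pattern_counts_insert_min = pattern_count_insert_min[where T = valley, OF _ _ valley_bump]
  pattern_count_insert_min[where T = peak, OF _ _ peak_bump]
  pattern_count_insert_min[where T = double_descent, OF _ _ double_descent_bump]
  pattern_count_insert_min[where T = double_ascent, OF _ _ double_ascent_bump]

lemma pattern_counts_insert_first:
  assumes "0 < length xs" "0 \<notin> set xs" "pattern_counts xs = (v, w, d, a)"
  shows "pattern_counts (insert_min 0 xs) = (v, w, d, Suc a)"
proof -
  have "0 < sig xs 1"
    using assms(1) sig_pos_iff[OF assms(2)] by (simp add: Suc_le_eq)
  then show ?thesis
    using assms(3) pattern_counts_insert_min[of 0 xs] assms(2)
    by (simp add: pattern_counts_def pattern_at_def pattern_defs)
qed

lemma pattern_counts_insert_last:
  assumes "0 < length xs" "0 \<notin> set xs" "pattern_counts xs = (v, w, d, a)"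
  shows "pattern_counts (insert_min (length xs) xs) = (v, w, Suc d, a)"
proof -
  have "0 < sig xs (length xs)"
    using assms(1) sig_pos_iff[OF assms(2)] by (simp add: Suc_le_eq)
  then show ?thesis
    using assms(3) pattern_counts_insert_min[of "length xs" xs] assms(2)
    by (simp add: pattern_counts_def pattern_at_def pattern_defs sig_beyond)
qed

lemma pattern_counts_insert_interior:
  assumes xs: "distinct xs" "0 \<notin> set xs" and p: "1 \<le> p" "p < length xs"
    and c: "pattern_counts xs = (v, w, d, a)"
  shows "pattern_at double_ascent xs p \<Longrightarrow> pattern_counts (insert_min p xs) = (Suc v, Suc w, d, a - 1)"
    and "pattern_at valley xs p \<Longrightarrow> pattern_counts (insert_min p xs) = (v, w, Suc d, a)"
    and "pattern_at double_descent xs (Suc p) \<Longrightarrow> pattern_counts (insert_min p xs) = (Suc v, Suc w, d - 1, a)"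
    and "pattern_at valley xs (Suc p) \<Longrightarrow> pattern_counts (insert_min p xs) = (v, w, d, Suc a)"
proof -
  have pos: "0 < sig xs p" "0 < sig xs (Suc p)"
    using p sig_pos_iff[OF xs(2)] by auto
  then have "sig xs (p - 1) \<noteq> sig xs p" "sig xs p \<noteq> sig xs (Suc p)" "sig xs (Suc p) \<noteq> sig xs (Suc (Suc p))"
    using sig_neq_Suc[OF xs, of "p - 1"] sig_neq_Suc[OF xs, of p] sig_neq_Suc[OF xs, of "Suc p"] p
    by simp_all
  note facts = this pos c pattern_counts_insert_min[of p xs] p xs(2)
  show "pattern_at double_ascent xs p \<Longrightarrow> pattern_counts (insert_min p xs) = (Suc v, Suc w, d, a - 1)"
    using facts by (simp add: pattern_counts_def pattern_at_def pattern_defs)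
  show "pattern_at valley xs p \<Longrightarrow> pattern_counts (insert_min p xs) = (v, w, Suc d, a)"
    using facts by (simp add: pattern_counts_def pattern_at_def pattern_defs)
  show "pattern_at double_descent xs (Suc p) \<Longrightarrow> pattern_counts (insert_min p xs) = (Suc v, Suc w, d - 1, a)"
    using facts by (simp add: pattern_counts_def pattern_at_def pattern_defs)
  show "pattern_at valley xs (Suc p) \<Longrightarrow> pattern_counts (insert_min p xs) = (v, w, d, Suc a)"
    using facts by (simp add: pattern_counts_def pattern_at_def pattern_defs)
qed

lemma interior_slot_cases:
  assumes "distinct xs" "0 \<notin> set xs" "1 \<le> p" "p < length xs"
  shows "pattern_at double_ascent xs p \<or> pattern_at valley xs p
    \<or> pattern_at double_descent xs (Suc p) \<or> pattern_at valley xs (Suc p)"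
proof -
  have "0 < sig xs p"
    using assms sig_pos_iff[OF assms(2)] by auto
  then have "sig xs (p - 1) \<noteq> sig xs p" "sig xs p \<noteq> sig xs (Suc p)" "sig xs (Suc p) \<noteq> sig xs (Suc (Suc p))"
    using sig_neq_Suc[OF assms(1,2), of "p - 1"] sig_neq_Suc[OF assms(1,2), of p]
      sig_neq_Suc[OF assms(1,2), of "Suc p"] assms
    by (simp_all add: sig_pos_iff[OF assms(2)])
  then show ?thesis
    by (auto simp: pattern_at_def pattern_defs)
qed

lemma card_pattern_at_interior:
  assumes "\<And>x y z. T x y z \<Longrightarrow> x \<noteq> y" "\<And>x y. \<not> T x y 0"
  shows "card {p \<in> {1..<length xs}. pattern_at T xs p} = pattern_count T xs"
  unfolding pattern_count_eq_card
proof (rule arg_cong[of _ _ card], intro set_eqI iffI)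
  fix i
  assume i: "i \<in> {i \<in> {..<length xs + 2}. pattern_at T xs i}"
  then have "T (sig xs (i - 1)) (sig xs i) (sig xs (Suc i))"
    by (simp add: pattern_at_def)
  then have "sig xs (i - 1) \<noteq> sig xs i" and nz: "sig xs (Suc i) \<noteq> 0"
    using assms by metis+
  then have "i \<noteq> 0"
    by (metis diff_0_eq_0)
  moreover have "i < length xs"
    using nz by (metis not_less_eq sig_beyond)
  ultimately show "i \<in> {p \<in> {1..<length xs}. pattern_at T xs p}"
    using i by simp
qed auto

lemma card_pattern_at_interior_Suc:
  assumes "\<And>y z. \<not> T 0 y z" "\<And>x. \<not> T x 0 0"
  shows "card {p \<in> {1..<length xs}. pattern_at T xs (Suc p)} = pattern_count T xs"
proof -
  have "Suc ` {p \<in> {1..<length xs}. pattern_at T xs (Suc p)} = {i \<in> {..<length xs + 2}. pattern_at T xs i}"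
  proof (intro set_eqI iffI)
    fix i
    assume i: "i \<in> {i \<in> {..<length xs + 2}. pattern_at T xs i}"
    then have "T (sig xs (i - 1)) (sig xs i) (sig xs (Suc i))"
      by (simp add: pattern_at_def)
    then have "sig xs (i - 1) \<noteq> 0" and nz: "sig xs i \<noteq> 0 \<or> sig xs (Suc i) \<noteq> 0"
      using assms by metis+
    then have "i - 1 \<noteq> 0"
      by (metis sig_0)
    moreover have "i \<le> length xs"
    proof (rule ccontr)
      assume "\<not> i \<le> length xs"
      then show False
        using nz by (simp add: sig_beyond)
    qed
    ultimately show "i \<in> Suc ` {p \<in> {1..<length xs}. pattern_at T xs (Suc p)}"
      using i by (intro image_eqI[of _ _ "i - 1"]) auto
  qed auto
  moreover have "card (Suc ` {p \<in> {1..<length xs}. pattern_at T xs (Suc p)})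
      = card {p \<in> {1..<length xs}. pattern_at T xs (Suc p)}"
    by (simp add: card_image)
  ultimately show ?thesis
    by (simp add: pattern_count_eq_card)
qed

lemma card_interior_slots:
  assumes "pattern_counts xs = (v, w, d, a)"
  shows "card {p \<in> {1..<length xs}. pattern_at double_ascent xs p} = a"
    and "card {p \<in> {1..<length xs}. pattern_at valley xs p} = v"
    and "card {p \<in> {1..<length xs}. pattern_at double_descent xs (Suc p)} = d"
    and "card {p \<in> {1..<length xs}. pattern_at valley xs (Suc p)} = v"
  using assms card_pattern_at_interior[of double_ascent xs] card_pattern_at_interior[of valley xs]
    card_pattern_at_interior_Suc[of double_descent xs] card_pattern_at_interior_Suc[of valley xs]
  by (auto simp: pattern_counts_def pattern_defs)

lemma peak_count_pos:
  assumes xs: "xs \<in> perms m" and "1 \<le> m"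
  shows "0 < pattern_count peak xs"
proof -
  note P = perms_D[OF xs]
  obtain k where k: "k < m" "xs ! k = m"
    using P assms(2) by (metis atLeastAtMost_iff in_set_conv_nth order_refl)
  then have top: "sig xs (Suc k) = m"
    using P by (simp add: sig_def)
  have "sig xs k \<noteq> m" "sig xs (Suc (Suc k)) \<noteq> m"
    using top sig_neq_Suc[OF P(1,2), of k] sig_neq_Suc[OF P(1,2), of "Suc k"] assms(2) by auto
  then have "pattern_at peak xs (Suc k)"
    using top sig_le[OF xs, of k] sig_le[OF xs, of "Suc (Suc k)"] by (simp add: pattern_at_def peak_def)
  moreover have "Suc k < length xs + 2"
    using k P by simp
  ultimately show ?thesis
    unfolding pattern_count_eq_card by (auto simp: card_gt_0_iff)
qed

section \<open>The recurrence for \<open>Pn\<close>\<close>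

definition stat_monomial ::
  "'a::comm_ring_1 \<Rightarrow> 'a \<Rightarrow> 'a \<Rightarrow> 'a \<Rightarrow> 'a \<Rightarrow> 'a \<Rightarrow> nat \<times> nat \<times> nat \<times> nat \<Rightarrow> nat \<Rightarrow> nat \<Rightarrow> 'a" where
  "stat_monomial u1 u2 u3 u4 \<alpha> \<beta> c l r = (case c of (v, w, d, a) \<Rightarrow>
     u1 ^ v * u2 ^ (w - 1) * u3 ^ d * u4 ^ a * \<alpha> ^ (l - 1) * \<beta> ^ (r - 1))"

definition perm_weight :: "'a::comm_ring_1 \<Rightarrow> 'a \<Rightarrow> 'a \<Rightarrow> 'a \<Rightarrow> 'a \<Rightarrow> 'a \<Rightarrow> nat list \<Rightarrow> 'a" where
  "perm_weight u1 u2 u3 u4 \<alpha> \<beta> xs =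
     stat_monomial u1 u2 u3 u4 \<alpha> \<beta> (pattern_counts xs) (LRmax xs) (RLmax xs)"

lemma Pn_eq_sum_perm_weight:
  "Pn n u1 u2 u3 u4 \<alpha> \<beta> = (\<Sum>xs\<in>perms (Suc n). perm_weight u1 u2 u3 u4 \<alpha> \<beta> xs)"
  unfolding Pn_def perm_weight_def stat_monomial_def pattern_counts_def
  by (rule sum.cong) (simp, frule perms_D(2), simp add: Vst_eq_pattern_count Wst_eq_pattern_count
      rdd_eq_pattern_count lda_eq_pattern_count)

lemma eps_stat_monomial:
  assumes "1 \<le> w"
  shows "eps (stat_monomial (Dual u1 (u1 * (u3 + u4))) (Dual u2 0) (Dual u3 (u1 * u2)) (Dual u4 (u1 * u2))
      (Dual \<alpha> 0) (Dual \<beta> 0) (v, w, d, a) l r)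
    = of_nat v * (u3 + u4) * stat_monomial u1 u2 u3 u4 \<alpha> \<beta> (v, w, d, a) l r
      + of_nat d * stat_monomial u1 u2 u3 u4 \<alpha> \<beta> (Suc v, Suc w, d - 1, a) l r
      + of_nat a * stat_monomial u1 u2 u3 u4 \<alpha> \<beta> (Suc v, Suc w, d, a - 1) l r"
proof -
  obtain w' where w: "w = Suc w'"
    using assms by (cases w) auto
  have pow: "of_nat k * x ^ (k - 1) * (x * y) = of_nat k * x ^ k * y" for k and x y :: 'a
    by (cases k) (simp_all add: algebra_simps)
  show ?thesis
    unfolding stat_monomial_def w
    by (simp only: dual_simps re_power eps_power dual.sel pow prod.case) (simp add: algebra_simps)
qed

context
  fixes u1 u2 u3 u4 \<alpha> \<beta> :: "'a::comm_ring_1" and xs :: "nat list" and m :: nat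
  assumes xs: "xs \<in> perms m" and m: "1 \<le> m"
begin

lemma perm_weight_insert_first:
  "perm_weight u1 u2 u3 u4 \<alpha> \<beta> (insert_min 0 xs) = \<alpha> * u4 * perm_weight u1 u2 u3 u4 \<alpha> \<beta> xs"
proof -
  note P = perms_D[OF xs]
  obtain v w d a where c: "pattern_counts xs = (v, w, d, a)"
    by (metis prod_cases4)
  obtain l where l: "LRmax xs = Suc l"
    using LRmax_pos[OF xs m] by (metis Suc_pred)
  have "pattern_counts (insert_min 0 xs) = (v, w, d, Suc a)"
    using pattern_counts_insert_first[OF _ P(2) c] P(3) m by simp
  moreover have "LRmax (insert_min 0 xs) = Suc (LRmax xs)" "RLmax (insert_min 0 xs) = RLmax xs"
    using LRmax_insert_min[of 0 xs] RLmax_insert_min[of 0 xs] P(2,3) m by simp_all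
  ultimately show ?thesis
    by (simp add: perm_weight_def stat_monomial_def c l algebra_simps)
qed

lemma perm_weight_insert_last:
  "perm_weight u1 u2 u3 u4 \<alpha> \<beta> (insert_min m xs) = \<beta> * u3 * perm_weight u1 u2 u3 u4 \<alpha> \<beta> xs"
proof -
  note P = perms_D[OF xs]
  obtain v w d a where c: "pattern_counts xs = (v, w, d, a)"
    by (metis prod_cases4)
  obtain r where r: "RLmax xs = Suc r"
    using RLmax_pos[OF xs m] by (metis Suc_pred)
  have "pattern_counts (insert_min m xs) = (v, w, Suc d, a)"
    using pattern_counts_insert_last[OF _ P(2) c] P(3) m by simp
  moreover have "LRmax (insert_min m xs) = LRmax xs" "RLmax (insert_min m xs) = Suc (RLmax xs)"
    using LRmax_insert_min[of m xs] RLmax_insert_min[of m xs] P(2,3) m by simp_all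
  ultimately show ?thesis
    by (simp add: perm_weight_def stat_monomial_def c r algebra_simps)
qed

lemma perm_weight_insert_interior:
  assumes p: "p \<in> {1..<m}" and c: "pattern_counts xs = (v, w, d, a)"
  shows "perm_weight u1 u2 u3 u4 \<alpha> \<beta> (insert_min p xs) =
      of_bool (pattern_at double_ascent xs p)
        * stat_monomial u1 u2 u3 u4 \<alpha> \<beta> (Suc v, Suc w, d, a - 1) (LRmax xs) (RLmax xs)
    + of_bool (pattern_at valley xs p) * (u3 * perm_weight u1 u2 u3 u4 \<alpha> \<beta> xs)
    + of_bool (pattern_at double_descent xs (Suc p))
        * stat_monomial u1 u2 u3 u4 \<alpha> \<beta> (Suc v, Suc w, d - 1, a) (LRmax xs) (RLmax xs)
    + of_bool (pattern_at valley xs (Suc p)) * (u4 * perm_weight u1 u2 u3 u4 \<alpha> \<beta> xs)"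
proof -
  note P = perms_D[OF xs]
  have p': "1 \<le> p" "p < length xs"
    using p P by auto
  have "LRmax (insert_min p xs) = LRmax xs" "RLmax (insert_min p xs) = RLmax xs"
    using LRmax_insert_min[of p xs] RLmax_insert_min[of p xs] P(2) p' by simp_all
  then have weight: "perm_weight u1 u2 u3 u4 \<alpha> \<beta> (insert_min p xs)
      = stat_monomial u1 u2 u3 u4 \<alpha> \<beta> (pattern_counts (insert_min p xs)) (LRmax xs) (RLmax xs)"
    by (simp add: perm_weight_def)
  have old: "perm_weight u1 u2 u3 u4 \<alpha> \<beta> xs = stat_monomial u1 u2 u3 u4 \<alpha> \<beta> (v, w, d, a) (LRmax xs) (RLmax xs)"
    by (simp add: perm_weight_def c)
  note new = pattern_counts_insert_interior[OF P(1,2) p' c]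
  consider "pattern_at double_ascent xs p" | "pattern_at valley xs p"
    | "pattern_at double_descent xs (Suc p)" | "pattern_at valley xs (Suc p)"
    using interior_slot_cases[OF P(1,2) p'] by blast
  then show ?thesis
  proof cases
    case 1
    then show ?thesis
      by (auto simp: weight new(1) pattern_at_def pattern_defs)
  next
    case 2
    then show ?thesis
      by (auto simp: weight new(2) pattern_at_def pattern_defs old stat_monomial_def)
  next
    case 3
    then show ?thesis
      by (auto simp: weight new(3) pattern_at_def pattern_defs)
  next
    case 4
    then show ?thesis
      by (auto simp: weight new(4) pattern_at_def pattern_defs old stat_monomial_def)
  qed
qed

lemma sum_perm_weight_insert_min:
  "(\<Sum>p\<le>m. perm_weight u1 u2 u3 u4 \<alpha> \<beta> (insert_min p xs)) =
     (\<alpha> * u4 + \<beta> * u3) * perm_weight u1 u2 u3 u4 \<alpha> \<beta> xs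
     + eps (perm_weight (Dual u1 (u1 * (u3 + u4))) (Dual u2 0) (Dual u3 (u1 * u2)) (Dual u4 (u1 * u2))
         (Dual \<alpha> 0) (Dual \<beta> 0) xs)"
proof -
  note P = perms_D[OF xs]
  obtain v w d a where c: "pattern_counts xs = (v, w, d, a)"
    by (metis prod_cases4)
  define K where "K = perm_weight u1 u2 u3 u4 \<alpha> \<beta> xs"
  define MA where "MA = stat_monomial u1 u2 u3 u4 \<alpha> \<beta> (Suc v, Suc w, d, a - 1) (LRmax xs) (RLmax xs)"
  define MD where "MD = stat_monomial u1 u2 u3 u4 \<alpha> \<beta> (Suc v, Suc w, d - 1, a) (LRmax xs) (RLmax xs)"
  note counts = card_interior_slots[OF c, unfolded P(3)]
  have "(\<Sum>p\<in>{1..<m}. perm_weight u1 u2 u3 u4 \<alpha> \<beta> (insert_min p xs))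
      = (\<Sum>p\<in>{1..<m}. of_bool (pattern_at double_ascent xs p) * MA
          + of_bool (pattern_at valley xs p) * (u3 * K)
          + of_bool (pattern_at double_descent xs (Suc p)) * MD
          + of_bool (pattern_at valley xs (Suc p)) * (u4 * K))"
    by (rule sum.cong) (simp_all add: perm_weight_insert_interior[OF _ c] MA_def MD_def K_def)
  also have "\<dots> = of_nat a * MA + of_nat v * (u3 * K) + of_nat d * MD + of_nat v * (u4 * K)"
    by (simp only: sum.distrib sum_of_bool_mult_const[OF finite_atLeastLessThan] counts)
  finally have interior: "(\<Sum>p\<in>{1..<m}. perm_weight u1 u2 u3 u4 \<alpha> \<beta> (insert_min p xs))
      = of_nat a * MA + of_nat v * (u3 * K) + of_nat d * MD + of_nat v * (u4 * K)" .
  have "1 \<le> w"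
    using peak_count_pos[OF xs m] c by (simp add: pattern_counts_def)
  then have eps: "eps (perm_weight (Dual u1 (u1 * (u3 + u4))) (Dual u2 0) (Dual u3 (u1 * u2))
      (Dual u4 (u1 * u2)) (Dual \<alpha> 0) (Dual \<beta> 0) xs) = of_nat v * (u3 + u4) * K + of_nat d * MD + of_nat a * MA"
    by (simp add: perm_weight_def c eps_stat_monomial K_def MA_def MD_def)
  have "{..m} = insert 0 (insert m {1..<m})"
    using m by auto
  then have "(\<Sum>p\<le>m. perm_weight u1 u2 u3 u4 \<alpha> \<beta> (insert_min p xs))
      = perm_weight u1 u2 u3 u4 \<alpha> \<beta> (insert_min 0 xs) + perm_weight u1 u2 u3 u4 \<alpha> \<beta> (insert_min m xs)
        + (\<Sum>p\<in>{1..<m}. perm_weight u1 u2 u3 u4 \<alpha> \<beta> (insert_min p xs))"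
    using m by (simp add: add.assoc)
  then show ?thesis
    unfolding interior eps perm_weight_insert_first perm_weight_insert_last K_def[symmetric]
    by (simp add: algebra_simps)
qed

end

text \<open>The \<open>eps\<close>-part of \<open>Pn\<close> at these dual arguments is \<open>\<delta> Pn\<close>.\<close>

lemma Pn_Suc:
  "Pn (Suc n) u1 u2 u3 u4 \<alpha> \<beta> = (\<alpha> * u4 + \<beta> * u3) * Pn n u1 u2 u3 u4 \<alpha> \<beta>
     + eps (Pn n (Dual u1 (u1 * (u3 + u4))) (Dual u2 0) (Dual u3 (u1 * u2)) (Dual u4 (u1 * u2))
         (Dual \<alpha> 0) (Dual \<beta> 0))"
proof -
  have "Pn (Suc n) u1 u2 u3 u4 \<alpha> \<beta>
      = (\<Sum>xs\<in>perms (Suc n). \<Sum>p\<le>Suc n. perm_weight u1 u2 u3 u4 \<alpha> \<beta> (insert_min p xs))"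
    by (simp only: Pn_eq_sum_perm_weight sum_perms_Suc)
  also have "\<dots> = (\<Sum>xs\<in>perms (Suc n). (\<alpha> * u4 + \<beta> * u3) * perm_weight u1 u2 u3 u4 \<alpha> \<beta> xs
      + eps (perm_weight (Dual u1 (u1 * (u3 + u4))) (Dual u2 0) (Dual u3 (u1 * u2)) (Dual u4 (u1 * u2))
         (Dual \<alpha> 0) (Dual \<beta> 0) xs))"
    by (rule sum.cong) (simp_all add: sum_perm_weight_insert_min del: sum.atMost_Suc)
  finally show ?thesis
    by (simp add: Pn_eq_sum_perm_weight sum.distrib sum_distrib_left eps_sum)
qed

lemma Pn_0: "Pn 0 u1 u2 u3 u4 \<alpha> \<beta> = 1"
proof -
  have "perms 1 = {[1]}"
  proof (intro set_eqI iffI)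
    fix xs
    assume "xs \<in> perms 1"
    then have "length xs = 1" "set xs = {1}"
      using perms_D[of xs 1] by auto
    then show "xs \<in> {[1]}"
      by (cases xs) auto
  qed (auto simp: perms_def)
  moreover have "{i. i = k \<and> P i} = (if P k then {k} else {})" for k and P :: "nat \<Rightarrow> bool"
    by auto
  ultimately show ?thesis
    by (simp add: Pn_def Vst_def Wst_def rdd_def lda_def LRmax_def RLmax_def sig_def)
qed

section \<open>The closed form\<close>

text \<open>The substitution \<open>\<sigma>\<close> sends each indeterminate \<open>x\<close> to \<open>x + \<epsilon> \<delta> x\<close>; it fixes \<open>r\<close> and \<open>D\<close> and
  sends \<open>s\<close> to \<open>s + 2 q \<epsilon>\<close>, so the \<open>eps\<close>-part of the closed form is \<open>-2 q B\<^sub>n\<close>.\<close>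

lemma eps_Pn_poly:
  fixes \<alpha> u2 :: "'a::comm_ring_1"
  defines "s \<equiv> U3 + U4" and "q \<equiv> U1 * C3 u2" and "r \<equiv> (C3 (-1 - \<alpha>) - C3 \<alpha>) * (U3 - U4)"
    and "D \<equiv> (U3 + U4)\<^sup>2 - 4 * (U1 * C3 u2)"
  assumes closed: "2 ^ n * Pn n U1 (C3 u2) U3 U4 (C3 \<alpha>) (C3 (-1 - \<alpha>)) = sqrt_pow_fst n r D - s * sqrt_pow_snd n r D"
  shows "2 ^ n * eps (Pn n (Dual U1 (U1 * (U3 + U4))) (Dual (C3 u2) 0) (Dual U3 (U1 * C3 u2))
      (Dual U4 (U1 * C3 u2)) (Dual (C3 \<alpha>) 0) (Dual (C3 (-1 - \<alpha>)) 0)) = - (2 * q * sqrt_pow_snd n r D)"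
proof -
  define \<sigma> where "\<sigma> = eval3 (\<lambda>a. Dual (C3 a) 0) (Dual U1 (U1 * s)) (Dual U3 q) (Dual U4 q)"
  interpret \<sigma>: comm_ring_hom \<sigma>
    unfolding \<sigma>_def
    by (intro comm_ring_hom.comm_ring_hom_eval3 comm_ring_hom_comp[OF comm_ring_hom_Dual comm_ring_hom_C3])
  have vars: "\<sigma> U1 = Dual U1 (U1 * s)" "\<sigma> U3 = Dual U3 q" "\<sigma> U4 = Dual U4 q" "\<sigma> (C3 a) = Dual (C3 a) 0" for a
    unfolding \<sigma>_def
    by (simp_all add: comm_ring_hom.eval3_U1 comm_ring_hom.eval3_U3 comm_ring_hom.eval3_U4
        comm_ring_hom.eval3_C3 comm_ring_hom_comp[OF comm_ring_hom_Dual comm_ring_hom_C3])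
  have "\<sigma> r = Dual r 0" "\<sigma> D = Dual D 0" "\<sigma> s = Dual s (2 * q)"
    by (rule dual.expand; simp add: r_def D_def s_def q_def \<sigma>.hom_simps vars algebra_simps power2_eq_square)+
  then have "2 ^ n * \<sigma> (Pn n U1 (C3 u2) U3 U4 (C3 \<alpha>) (C3 (-1 - \<alpha>)))
      = sqrt_pow_fst n (Dual r 0) (Dual D 0) - Dual s (2 * q) * sqrt_pow_snd n (Dual r 0) (Dual D 0)"
    using arg_cong[OF closed, of \<sigma>] by (simp only: \<sigma>.hom_simps \<sigma>.hom_sqrt_pow)
  then have "eps (2 ^ n * \<sigma> (Pn n U1 (C3 u2) U3 U4 (C3 \<alpha>) (C3 (-1 - \<alpha>)))) = - (2 * q * sqrt_pow_snd n r D)"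
    by (simp only: eps_sqrt_pow_closed_form)
  then show ?thesis
    by (simp add: \<sigma>.hom_Pn vars s_def q_def)
qed

lemma Pn_closed_form_poly:
  fixes \<alpha> u2 :: "'a::comm_ring_1"
  defines "s \<equiv> U3 + U4" and "q \<equiv> U1 * C3 u2" and "r \<equiv> (C3 (-1 - \<alpha>) - C3 \<alpha>) * (U3 - U4)"
    and "D \<equiv> (U3 + U4)\<^sup>2 - 4 * (U1 * C3 u2)"
  shows "2 ^ n * Pn n U1 (C3 u2) U3 U4 (C3 \<alpha>) (C3 (-1 - \<alpha>)) = sqrt_pow_fst n r D - s * sqrt_pow_snd n r D"
proof (induction n)
  case 0
  then show ?case
    by (simp add: Pn_0)
next
  case (Suc n)
  have \<beta>: "C3 (-1 - \<alpha>) = -1 - C3 \<alpha>"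
    by (simp add: comm_ring_hom.hom_simps[OF comm_ring_hom_C3])
  have key: "2 * (C3 \<alpha> * U4 + C3 (-1 - \<alpha>) * U3) = r - s"
    unfolding r_def s_def \<beta> by (simp add: algebra_simps)
  have eps: "2 ^ n * eps (Pn n (Dual U1 (U1 * (U3 + U4))) (Dual (C3 u2) 0) (Dual U3 (U1 * C3 u2))
      (Dual U4 (U1 * C3 u2)) (Dual (C3 \<alpha>) 0) (Dual (C3 (-1 - \<alpha>)) 0)) = - (2 * q * sqrt_pow_snd n r D)"
    using eps_Pn_poly[of n u2 \<alpha>] Suc by (simp only: s_def q_def r_def D_def)
  have "2 ^ Suc n * Pn (Suc n) U1 (C3 u2) U3 U4 (C3 \<alpha>) (C3 (-1 - \<alpha>))
      = 2 * (C3 \<alpha> * U4 + C3 (-1 - \<alpha>) * U3) * (2 ^ n * Pn n U1 (C3 u2) U3 U4 (C3 \<alpha>) (C3 (-1 - \<alpha>)))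
        + 2 * (2 ^ n * eps (Pn n (Dual U1 (U1 * (U3 + U4))) (Dual (C3 u2) 0) (Dual U3 (U1 * C3 u2))
            (Dual U4 (U1 * C3 u2)) (Dual (C3 \<alpha>) 0) (Dual (C3 (-1 - \<alpha>)) 0)))"
    by (simp add: Pn_Suc algebra_simps)
  also have "\<dots> = (r - s) * (sqrt_pow_fst n r D - s * sqrt_pow_snd n r D) - 4 * q * sqrt_pow_snd n r D"
    unfolding key Suc eps by simp
  also have "\<dots> = (r * sqrt_pow_fst n r D + D * sqrt_pow_snd n r D) - s * (sqrt_pow_fst n r D + r * sqrt_pow_snd n r D)"
    unfolding D_def s_def q_def by (simp add: algebra_simps power2_eq_square)
  also have "\<dots> = sqrt_pow_fst (Suc n) r D - s * sqrt_pow_snd (Suc n) r D"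
    by (simp only: sqrt_pow_fst_Suc sqrt_pow_snd_Suc)
  finally show ?case .
qed

lemma Pn_closed_form:
  fixes u1 u2 u3 u4 \<alpha> \<beta> :: "'a::comm_ring_1"
  assumes "\<alpha> + \<beta> = -1"
  defines "r \<equiv> (\<beta> - \<alpha>) * (u3 - u4)" and "D \<equiv> (u3 + u4)\<^sup>2 - 4 * u1 * u2"
  shows "2 ^ n * Pn n u1 u2 u3 u4 \<alpha> \<beta> = sqrt_pow_fst n r D - (u3 + u4) * sqrt_pow_snd n r D"
proof -
  interpret ev: comm_ring_hom "eval3 (\<lambda>x. x) u1 u3 u4"
    by (intro comm_ring_hom.comm_ring_hom_eval3 comm_ring_hom_id)
  have vars: "eval3 (\<lambda>x. x) u1 u3 u4 U1 = u1" "eval3 (\<lambda>x. x) u1 u3 u4 U3 = u3"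
    "eval3 (\<lambda>x. x) u1 u3 u4 U4 = u4" "eval3 (\<lambda>x. x) u1 u3 u4 (C3 a) = a" for a
    by (simp_all add: comm_ring_hom.eval3_U1 comm_ring_hom.eval3_U3 comm_ring_hom.eval3_U4
        comm_ring_hom.eval3_C3 comm_ring_hom_id)
  have \<beta>: "\<beta> = -1 - \<alpha>"
    using assms(1) by (simp add: algebra_simps eq_diff_eq)
  show ?thesis
    using arg_cong[OF Pn_closed_form_poly[of n u2 \<alpha>], of "eval3 (\<lambda>x. x) u1 u3 u4"]
    by (simp add: ev.hom_simps ev.hom_Pn ev.hom_sqrt_pow vars r_def D_def \<beta> mult.assoc)
qed

theorem theorem5p1:
  fixes u1 u2 u3 u4 \<alpha> \<beta> :: "'a::comm_ring_1" and n :: nat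
  assumes "\<alpha> + \<beta> = -1" and "n \<ge> 1"
  shows "2 ^ n * Pn n u1 u2 u3 u4 \<alpha> \<beta> =
    (let \<Delta> = (u3 + u4)^2 - 4 * u1 * u2 in
     (\<Sum>k = 0..n div 2. of_nat (n choose (2*k)) * \<Delta> ^ k * (\<beta> - \<alpha>) ^ (n - 2*k) * (u3 - u4) ^ (n - 2*k))
     - (u3 + u4) * (\<Sum>k = 0..n div 2. of_nat (n choose (2*k+1)) * \<Delta> ^ k
            * (\<beta> - \<alpha>) ^ (n - 2*k - 1) * (u3 - u4) ^ (n - 2*k - 1)))"
  unfolding Pn_closed_form[OF assms(1)] sqrt_pow_fst_eq sqrt_pow_snd_eq Let_def ..

end
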